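(* Let $V\in C^3(\mathbb{R}^3)$ satisfy (U), let $\bar u<1$, $c_2>0$, $\varepsilon_2>0$, and let $(r^\varepsilon(t),u^\varepsilon(t))$, $t\in\mathbb{R}$, $\varepsilon\in(0,\varepsilon_2]$, be solutions of the effective equation (with parameter $\varepsilon$) such that $|u^\varepsilon(t)|\le\bar u$ and $|\dot u^\varepsilon(t)|+|\ddot u^\varepsilon(t)|\le c_2$ for all $t\in\mathbb{R}$, $\varepsilon\in(0,\varepsilon_2]$. Let $\mathcal I_\varepsilon$ be the center manifolds constructed after modifying $a,m,b$ to be constant outside $\{|u|\le(1+\bar u)/2\}$. Then for all sufficiently small $\varepsilon$, the solution $(r^\varepsilon,u^\varepsilon,\dot u^\varepsilon)$ lies on $\mathcal I_\varepsilon$.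
   Context: (U): $\inf V>-\infty$, $\sup(|V|+|\nabla V|+|\nabla^2V|+|\nabla^3V|)<\infty$. $\rho\in C_0^\infty$ radial, $\mathsf e=\int\rho\neq0$, $\hat\rho(k)=(2\pi)^{-3/2}\int\rho e^{-ik\cdot x}$. For $|u|<1$: $\gamma=(1-|u|^2)^{-1/2}$, $m_0(u)w=\gamma w+\gamma^3(u\cdot w)u$, $m_e=\frac13\int|\hat\rho|^2|k|^{-2}dk$, $\varphi(s)=\frac{1}{2s^2(1-s^2)}-\frac{1}{4s^3}\log\frac{1+s}{1-s}$, $m_f(u)w=3m_e(\varphi(|u|)w+|u|^{-1}\varphi'(|u|)(u\cdot w)u)$, $m=m_0+m_f$, $a(u)w=\frac{\mathsf e^2}{12\pi}[\gamma^4w+4\gamma^6(u\cdot w)u]$, $b(u,w)=\frac{\mathsf e^2}{4\pi}[2\gamma^6(u\cdot w)w+\gamma^6|w|^2u+6\gamma^8(u\cdot w)^2u]$. Effective equation: $\dot r=u$, $m(u)\dot u=-\nabla V(r)+\varepsilon a(u)\ddot u+\varepsilon b(u,\dot u)$; with $x=(r,u)$, $y=\dot u$: $\dot x=(u,y)$, $\varepsilon\dot y=a(u)^{-1}[m(u)y+\nabla V(r)-\varepsilon b(u,y)]$. For $\varepsilon=0$, $\mathcal I_0=\{y=-m(u)^{-1}\nabla V(r)\}$ is invariant and normally repulsive. After modification of $a,m,b$ for $|u|$ near $1$ as stated, geometric singular perturbation theory yields for small $\varepsilon>0$ a $C^1$ uniformly bounded function $h_\varepsilon$ with $|h_\varepsilon+m^{-1}\nabla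 V|\le c\varepsilon$ whose graph $\mathcal I_\varepsilon=\{(r,u,h_\varepsilon(r,u))\}$ is the invariant center manifold of the modified system. *)

theory Defs
  imports "HOL-Analysis.Analysis"
begin

fun iter_partial :: "3 list \<Rightarrow> (real^3 \<Rightarrow> real) \<Rightarrow> real^3 \<Rightarrow> real" where
  "iter_partial [] f = f"
| "iter_partial (i # is) f = (\<lambda>x. frechet_derivative (iter_partial is f) (at x) (axis i 1))"

definition smooth_fun :: "(real^3 \<Rightarrow> real) \<Rightarrow> bool" where
  "smooth_fun f \<longleftrightarrow> (\<forall>is. iter_partial is f differentiable_on UNIV)"

definition radial :: "(real^3 \<Rightarrow> real) \<Rightarrow> bool" where
  "radial f \<longleftrightarrow> (\<forall>x y. norm x = norm y \<longrightarrow> f x = f y)"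

definition compact_support :: "(real^3 \<Rightarrow> real) \<Rightarrow> bool" where
  "compact_support f \<longleftrightarrow> bounded {x. f x \<noteq> 0}"

definition charge :: "(real^3 \<Rightarrow> real) \<Rightarrow> real" where
  "charge rho = integral UNIV rho"

definition rhohat :: "(real^3 \<Rightarrow> real) \<Rightarrow> real^3 \<Rightarrow> complex" where
  "rhohat rho k = complex_of_real ((2 * pi) powr (-3/2)) *
      integral UNIV (\<lambda>x. complex_of_real (rho x) * cis (- (k \<bullet> x)))"

definition m_e :: "(real^3 \<Rightarrow> real) \<Rightarrow> real" where
  "m_e rho = (1/3) * integral UNIV (\<lambda>k. (cmod (rhohat rho k))^2 / (norm k)^2)"

definition gam :: "real^3 \<Rightarrow> real" where
  "gam u = 1 / sqrt (1 - (norm u)^2)"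

definition idm :: "real^3^3" where
  "idm = (\<chi> i j. if i = j then 1 else 0)"

definition outer :: "real^3 \<Rightarrow> real^3 \<Rightarrow> real^3^3" where
  "outer u v = (\<chi> i j. u $ i * v $ j)"

text \<open>phi, extended continuously by its limit 1/3 at s = 0.\<close>
definition phi :: "real \<Rightarrow> real" where
  "phi s = (if s = 0 then 1/3
            else 1 / (2 * s^2 * (1 - s^2)) - 1 / (4 * s^3) * ln ((1 + s) / (1 - s)))"

definition m0 :: "real^3 \<Rightarrow> real^3^3" where
  "m0 u = gam u *\<^sub>R idm + (gam u)^3 *\<^sub>R outer u u"

text \<open>At u = 0 the second term vanishes since (u.w)u = 0.\<close>
definition mf :: "(real^3 \<Rightarrow> real) \<Rightarrow> real^3 \<Rightarrow> real^3^3" where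
  "mf rho u = (3 * m_e rho) *\<^sub>R
      (phi (norm u) *\<^sub>R idm + (deriv phi (norm u) / norm u) *\<^sub>R outer u u)"

definition mmat :: "(real^3 \<Rightarrow> real) \<Rightarrow> real^3 \<Rightarrow> real^3^3" where
  "mmat rho u = m0 u + mf rho u"

definition amat :: "(real^3 \<Rightarrow> real) \<Rightarrow> real^3 \<Rightarrow> real^3^3" where
  "amat rho u = ((charge rho)^2 / (12 * pi)) *\<^sub>R
      ((gam u)^4 *\<^sub>R idm + (4 * (gam u)^6) *\<^sub>R outer u u)"

definition bvec :: "(real^3 \<Rightarrow> real) \<Rightarrow> real^3 \<Rightarrow> real^3 \<Rightarrow> real^3" where
  "bvec rho u w = ((charge rho)^2 / (4 * pi)) *\<^sub>R
      ((2 * (gam u)^6 * (u \<bullet> w)) *\<^sub>R w + ((gam u)^6 * (norm w)^2) *\<^sub>R u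
       + (6 * (gam u)^8 * (u \<bullet> w)^2) *\<^sub>R u)"

definition invariant_graph ::
  "real \<Rightarrow> (real^3 \<Rightarrow> real^3^3) \<Rightarrow> (real^3 \<Rightarrow> real^3^3) \<Rightarrow> (real^3 \<Rightarrow> real^3 \<Rightarrow> real^3)
   \<Rightarrow> (real^3 \<Rightarrow> real^3) \<Rightarrow> (((real^3) \<times> (real^3)) \<Rightarrow> real^3) \<Rightarrow> bool" where
  "invariant_graph eps A M B G h \<longleftrightarrow>
    (\<forall>T R U Y t0.
       is_interval T \<and> t0 \<in> T \<and>
       (\<forall>t\<in>T. (R has_vector_derivative U t) (at t within T) \<and>
               (U has_vector_derivative Y t) (at t within T) \<and>
               (Y has_vector_derivative
                  (1 / eps) *\<^sub>R (matrix_inv (A (U t)) *v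
                     (M (U t) *v Y t + G (R t) - eps *\<^sub>R B (U t) (Y t)))) (at t within T)) \<and>
       Y t0 = h (R t0, U t0)
     \<longrightarrow> (\<forall>t\<in>T. Y t = h (R t, U t)))"

end

theory Submission
  imports Defs
begin

text \<open>
  Invariance of the graph of \<open>h\<close> forces the vector field of the (modified) first-order system
  to be tangent to it, \<open>Dh (u, h) = jerk (r, u, h)\<close>: run a local Picard solution from a point of the
  graph, which exists because the field is locally Lipschitz where the modification is inactive.
  For a solution with \<open>|u| \<le> ubar\<close> and bounded \<open>u'\<close>, the deviation \<open>z = u' - h (r, u)\<close> then satisfies
  \<open>z' = A\<^sup>-\<^sup>1 M z / \<epsilon> + O(|z|)\<close>. The matrices \<open>A\<close> and \<open>M\<close> both have the form \<open>a I + b u u\<^sup>T\<close>, and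
  \<open>A\<^sup>-\<^sup>1 M\<close> is uniformly positive definite, so for small \<open>\<epsilon>\<close> the quantity \<open>|z|\<^sup>2\<close> grows exponentially
  unless it vanishes; being bounded for all times, it vanishes.
\<close>

section \<open>The power series of \<open>\<phi>\<close>\<close>

definition phi_coeff :: "nat \<Rightarrow> real" where
  "phi_coeff k = (real k + 1) / (2 * real k + 3)"

definition phi_powser :: "real \<Rightarrow> real" where
  "phi_powser x = (\<Sum>k. phi_coeff k * x ^ k)"

definition phi_powser' :: "real \<Rightarrow> real" where
  "phi_powser' x = (\<Sum>k. diffs phi_coeff k * x ^ k)"

lemma phi_coeff_bounds: "0 \<le> phi_coeff k" "phi_coeff k \<le> 1"
  by (simp_all add: phi_coeff_def)

lemma summable_phi_coeff: "\<bar>x\<bar> < 1 \<Longrightarrow> summable (\<lambda>k. phi_coeff k * x ^ k)"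
  by (rule summable_comparison_test'[of "\<lambda>k. \<bar>x\<bar> ^ k" 0])
     (auto simp: abs_mult power_abs phi_coeff_bounds intro!: mult_left_le_one_le)

lemma summable_diffs_phi_coeff: "\<bar>x\<bar> < 1 \<Longrightarrow> summable (\<lambda>k. diffs phi_coeff k * x ^ k)"
  using termdiff_converges[of x 1 phi_coeff] summable_phi_coeff by simp

lemma phi_powser_has_derivative:
  "\<bar>x\<bar> < 1 \<Longrightarrow> (phi_powser has_real_derivative phi_powser' x) (at x)"
  unfolding phi_powser_def phi_powser'_def
  using termdiffs_strong'[of 1 phi_coeff x] summable_phi_coeff by simp

lemma phi_powser_nonneg: "0 \<le> x \<Longrightarrow> x < 1 \<Longrightarrow> 0 \<le> phi_powser x"
  unfolding phi_powser_def
  by (intro suminf_nonneg summable_phi_coeff) (auto simp: phi_coeff_bounds)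

lemma phi_powser'_nonneg: "0 \<le> x \<Longrightarrow> x < 1 \<Longrightarrow> 0 \<le> phi_powser' x"
  unfolding phi_powser'_def
  by (intro suminf_nonneg summable_diffs_phi_coeff) (auto simp: phi_coeff_bounds diffs_def)

lemma phi_eq_phi_powser:
  assumes s: "0 < s" "s < 1"
  shows "phi s = phi_powser (s\<^sup>2)"
proof -
  have "((1 + s) / (1 - s) - 1) / ((1 + s) / (1 - s) + 1) = s"
    using s by (simp add: field_simps)
  then have "(\<lambda>k. 2 * s ^ (2 * k + 1) / real (2 * k + 1)) sums ln ((1 + s) / (1 - s))"
    using ln_series_quadratic[of "(1 + s) / (1 - s)"] s by simp
  then have log: "(\<lambda>k. 2 * s * (s\<^sup>2) ^ k / (2 * real k + 1)) sums ln ((1 + s) / (1 - s))"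
    by (simp add: power_add flip: power_mult power_mult_distrib) (simp add: power_mult mult_ac add.commute)
  have geo: "(\<lambda>k. (s\<^sup>2) ^ k) sums (1 / (1 - s\<^sup>2))"
    using geometric_sums[of "s\<^sup>2"] s by (simp add: abs_less_iff power_less_one_iff)
  have "(\<lambda>k. (s\<^sup>2) ^ k / (2 * s\<^sup>2) - 2 * s * (s\<^sup>2) ^ k / (2 * real k + 1) / (4 * s ^ 3)) sums phi s"
    using sums_diff[OF sums_divide[OF geo, of "2 * s\<^sup>2"] sums_divide[OF log, of "4 * s ^ 3"]] s
    by (simp add: phi_def mult.commute)
  moreover have term_eq: "p / (2 * s\<^sup>2) - 2 * s * p / (2 * real k + 1) / (4 * s ^ 3)
      = real k / (2 * real k + 1) * p / s\<^sup>2" for p k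
  proof -
    have "2 * real k + 1 > 0" by simp
    then show ?thesis
      using s by (simp add: divide_simps power3_eq_cube power2_eq_square) (simp add: algebra_simps)
  qed
  ultimately have "(\<lambda>k. real k / (2 * real k + 1) * (s\<^sup>2) ^ k / s\<^sup>2) sums phi s"
    by (simp only: term_eq)
  then have "(\<lambda>k. real (Suc k) / (2 * real (Suc k) + 1) * (s\<^sup>2) ^ Suc k / s\<^sup>2) sums phi s"
    by (subst sums_Suc_iff) simp
  moreover have "real (Suc k) / (2 * real (Suc k) + 1) * (s\<^sup>2) ^ Suc k / s\<^sup>2
      = phi_coeff k * (s\<^sup>2) ^ k" for k
    using s by (simp add: phi_coeff_def add.commute)
  ultimately show ?thesis by (simp add: phi_powser_def sums_iff)
qed

lemma deriv_phi_eq: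
  assumes s: "0 < s" "s < 1"
  shows "deriv phi s = 2 * s * phi_powser' (s\<^sup>2)"
proof -
  have "\<bar>s\<^sup>2\<bar> < 1" using s by (simp add: power_less_one_iff)
  then have "((\<lambda>x. phi_powser (x\<^sup>2)) has_real_derivative phi_powser' (s\<^sup>2) * (2 * s)) (at s)"
    by (auto intro!: DERIV_chain2[OF phi_powser_has_derivative] derivative_eq_intros)
  then have "(phi has_real_derivative phi_powser' (s\<^sup>2) * (2 * s)) (at s)"
    by (rule has_field_derivative_transform_within_open[of _ _ _ "{0<..<1}"])
       (use s phi_eq_phi_powser in auto)
  then show ?thesis by (simp add: DERIV_imp_deriv)
qed

section \<open>Matrices of the form \<open>a I + b u u\<^sup>T\<close>\<close>

lemma idm_eq_mat_1: "idm = mat 1"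
  by (simp add: idm_def mat_def)

lemma outer_mv: "outer u v *v z = (v \<bullet> z) *\<^sub>R u"
  by (simp add: vec_eq_iff matrix_vector_mult_def outer_def inner_vec_def sum_distrib_left algebra_simps)

lemma idm_outer_mv:
  "(a *\<^sub>R idm + b *\<^sub>R outer u u) *v z = a *\<^sub>R z + (b * (u \<bullet> z)) *\<^sub>R u"
  by (simp add: matrix_vector_mult_add_rdistrib idm_eq_mat_1 outer_mv flip: scaleR_matrix_vector_assoc)

lemma idm_outer_mult:
  "(a *\<^sub>R idm + b *\<^sub>R outer u u) ** (a' *\<^sub>R idm + b' *\<^sub>R outer u u)
    = (a * a') *\<^sub>R idm + (a * b' + b * a' + b * b' * (u \<bullet> u)) *\<^sub>R outer u u"
  by (rule matrix_eq[THEN iffD2])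
     (simp add: idm_outer_mv flip: matrix_vector_mul_assoc, simp add: algebra_simps)

lemma idm_outer_eq_mat_1: "a = 1 \<Longrightarrow> b = 0 \<Longrightarrow> a *\<^sub>R idm + b *\<^sub>R outer u u = mat 1"
  by (simp add: idm_eq_mat_1)

lemma matrix_inv_eqI:
  fixes A B :: "real^'n^'n"
  assumes AB: "A ** B = mat 1" and BA: "B ** A = mat 1"
  shows "matrix_inv A = B"
proof -
  have inv: "A ** matrix_inv A = mat 1 \<and> matrix_inv A ** A = mat 1"
    unfolding matrix_inv_def by (rule someI[of _ B]) (use AB BA in simp)
  then have "matrix_inv A = matrix_inv A ** (A ** B)"
    by (simp add: AB)
  also have "\<dots> = B"
    using inv by (simp add: matrix_mul_assoc)
  finally show ?thesis .
qed

text \<open>Sherman--Morrison formula.\<close>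
lemma matrix_inv_idm_outer:
  assumes "a \<noteq> 0" "a + b * (u \<bullet> u) \<noteq> 0"
  defines "N \<equiv> (1 / a) *\<^sub>R idm + (- b / (a * (a + b * (u \<bullet> u)))) *\<^sub>R outer u u"
  shows "matrix_inv (a *\<^sub>R idm + b *\<^sub>R outer u u) = N"
    and "matrix_inv (a *\<^sub>R idm + b *\<^sub>R outer u u) ** (a *\<^sub>R idm + b *\<^sub>R outer u u) = mat 1"
proof -
  have zero: "a * (- b / (a * (a + b * (u \<bullet> u)))) + b * (1 / a) + b * (- b / (a * (a + b * (u \<bullet> u)))) * (u \<bullet> u) = 0"
    using assms(1,2) by (simp add: divide_simps) (simp add: algebra_simps power2_eq_square)
  have "(a *\<^sub>R idm + b *\<^sub>R outer u u) ** N = mat 1" "N ** (a *\<^sub>R idm + b *\<^sub>R outer u u) = mat 1"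
    unfolding N_def idm_outer_mult
    by (intro idm_outer_eq_mat_1; use zero assms(1) in \<open>simp add: algebra_simps\<close>)+
  then show "matrix_inv (a *\<^sub>R idm + b *\<^sub>R outer u u) = N"
    and "matrix_inv (a *\<^sub>R idm + b *\<^sub>R outer u u) ** (a *\<^sub>R idm + b *\<^sub>R outer u u) = mat 1"
    by (simp_all add: matrix_inv_eqI)
qed

text \<open>The eigenvalues are \<open>a\<close> on \<open>u\<^sup>\<bottom>\<close> and \<open>a + b |u|\<^sup>2\<close> along \<open>u\<close>.\<close>
lemma inner_idm_outer_ge:
  "min a (a + b * (u \<bullet> u)) * (z \<bullet> z) \<le> z \<bullet> ((a *\<^sub>R idm + b *\<^sub>R outer u u) *v z)"
proof -
  have quad: "z \<bullet> ((a *\<^sub>R idm + b *\<^sub>R outer u u) *v z) = a * (z \<bullet> z) + b * (u \<bullet> z)\<^sup>2"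
    by (simp add: idm_outer_mv inner_add_right inner_commute[of z u] power2_eq_square)
  have "(u \<bullet> z)\<^sup>2 \<le> (u \<bullet> u) * (z \<bullet> z)"
    by (metis Cauchy_Schwarz_ineq)
  show ?thesis
  proof (cases "b \<ge> 0")
    case True
    then show ?thesis
      unfolding quad by (auto simp: min_def intro: add_increasing2 mult_right_mono)
  next
    case False
    then have "b * ((u \<bullet> u) * (z \<bullet> z)) \<le> b * (u \<bullet> z)\<^sup>2"
      using \<open>(u \<bullet> z)\<^sup>2 \<le> (u \<bullet> u) * (z \<bullet> z)\<close> by (simp add: mult_left_mono_neg)
    moreover have "min a (a + b * (u \<bullet> u)) * (z \<bullet> z) \<le> (a + b * (u \<bullet> u)) * (z \<bullet> z)"
      by (simp add: mult_right_mono)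
    ultimately show ?thesis
      unfolding quad by (simp add: algebra_simps)
  qed
qed

lemma inner_idm_outer_mult_ge:
  assumes "0 \<le> c" "c \<le> a" "c \<le> a + b * (u \<bullet> u)" "1 \<le> a'" "1 \<le> a' + b' * (u \<bullet> u)"
  shows "c * (z \<bullet> z) \<le> z \<bullet> (((a *\<^sub>R idm + b *\<^sub>R outer u u) ** (a' *\<^sub>R idm + b' *\<^sub>R outer u u)) *v z)"
proof -
  have "c \<le> a * a'"
    using assms mult_left_mono[of 1 a' a] by simp
  moreover have "c \<le> (a + b * (u \<bullet> u)) * (a' + b' * (u \<bullet> u))"
    using assms mult_left_mono[of 1 "a' + b' * (u \<bullet> u)" "a + b * (u \<bullet> u)"] by simp
  ultimately have "c \<le> min (a * a') (a * a' + (a * b' + b * a' + b * b' * (u \<bullet> u)) * (u \<bullet> u))"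
    by (simp add: algebra_simps)
  then have "c * (z \<bullet> z)
      \<le> min (a * a') (a * a' + (a * b' + b * a' + b * b' * (u \<bullet> u)) * (u \<bullet> u)) * (z \<bullet> z)"
    by (rule mult_right_mono) simp
  then show ?thesis
    unfolding idm_outer_mult by (rule order_trans[OF _ inner_idm_outer_ge])
qed

lemma norm_idm_outer_mv_le:
  "norm ((a *\<^sub>R idm + b *\<^sub>R outer u u) *v w) \<le> (\<bar>a\<bar> + \<bar>b\<bar> * (u \<bullet> u)) * norm w"
proof -
  have "\<bar>u \<bullet> w\<bar> * norm u \<le> norm u * norm w * norm u"
    by (rule mult_right_mono[OF Cauchy_Schwarz_ineq2]) simp
  also have "\<dots> = (u \<bullet> u) * norm w"
    by (simp add: dot_square_norm power2_eq_square)
  finally have "\<bar>b\<bar> * (\<bar>u \<bullet> w\<bar> * norm u) \<le> \<bar>b\<bar> * ((u \<bullet> u) * norm w)"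
    by (rule mult_left_mono) simp
  then have "norm ((a *\<^sub>R idm + b *\<^sub>R outer u u) *v w) \<le> \<bar>a\<bar> * norm w + \<bar>b\<bar> * ((u \<bullet> u) * norm w)"
    unfolding idm_outer_mv by (intro norm_triangle_le add_mono) (simp_all add: abs_mult mult.assoc)
  then show ?thesis
    by (simp add: distrib_right mult.assoc)
qed

section \<open>The coefficients of the effective equation\<close>

definition amat_prefactor :: "(real^3 \<Rightarrow> real) \<Rightarrow> real" where
  "amat_prefactor rho = (charge rho)\<^sup>2 / (12 * pi)"

lemma amat_prefactor_pos: "charge rho \<noteq> 0 \<Longrightarrow> 0 < amat_prefactor rho"
  by (simp add: amat_prefactor_def)

lemma inner_self_less_1: "norm u < 1 \<Longrightarrow> u \<bullet> u < 1"
  by (simp add: dot_square_norm power_less_one_iff)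

lemma gam_eq: "gam u = 1 / sqrt (1 - u \<bullet> u)"
  by (simp add: gam_def dot_square_norm)

lemma gam_ge_1: "norm u < 1 \<Longrightarrow> 1 \<le> gam u"
  using inner_self_less_1[of u] by (simp add: gam_eq real_sqrt_le_1_iff)

lemma gam_power_even: "norm u < 1 \<Longrightarrow> gam u ^ (2 * n) = 1 / (1 - u \<bullet> u) ^ n"
  using inner_self_less_1[of u] by (simp add: gam_eq power_mult power_divide)

lemma m_e_nonneg: "0 \<le> m_e rho"
proof -
  let ?f = "\<lambda>k::real^3. (cmod (rhohat rho k))\<^sup>2 / (norm k)\<^sup>2"
  have "0 \<le> integral UNIV ?f"
    by (cases "?f integrable_on UNIV") (simp_all add: integral_nonneg not_integrable_integral)
  then show ?thesis by (simp add: m_e_def)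
qed

lemma amat_idm_outer:
  assumes "norm u < 1"
  shows "amat rho u = (amat_prefactor rho / (1 - u \<bullet> u)\<^sup>2) *\<^sub>R idm
                      + (4 * amat_prefactor rho / (1 - u \<bullet> u) ^ 3) *\<^sub>R outer u u"
  using gam_power_even[OF assms, of 2] gam_power_even[OF assms, of 3]
  by (simp add: amat_def amat_prefactor_def scaleR_add_right)

lemma matrix_inv_amat:
  assumes u: "norm u < 1" and charge: "charge rho \<noteq> 0"
  shows "matrix_inv (amat rho u) = ((1 - u \<bullet> u)\<^sup>2 / amat_prefactor rho) *\<^sub>R idm
           + (- 4 * (1 - u \<bullet> u)\<^sup>2 / (amat_prefactor rho * (1 + 3 * (u \<bullet> u)))) *\<^sub>R outer u u"
    and "matrix_inv (amat rho u) ** amat rho u = mat 1"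
proof -
  define d where "d = 1 - u \<bullet> u"
  define k where "k = amat_prefactor rho"
  have s: "u \<bullet> u = 1 - d" by (simp add: d_def)
  have d: "0 < d" "d \<le> 1" using inner_self_less_1[OF u] by (simp_all add: d_def)
  have k: "0 < k" using amat_prefactor_pos[OF charge] by (simp add: k_def)
  have sum: "k / d\<^sup>2 + 4 * k / d ^ 3 * (1 - d) = k * (4 - 3 * d) / d ^ 3"
    using d by (simp add: field_simps power2_eq_square power3_eq_cube)
  have ne: "k / d\<^sup>2 \<noteq> 0" "k / d\<^sup>2 + 4 * k / d ^ 3 * (u \<bullet> u) \<noteq> 0"
    unfolding s sum using d k by auto
  have coeff: "1 / (k / d\<^sup>2) = d\<^sup>2 / k"
    "- (4 * k / d ^ 3) / (k / d\<^sup>2 * (k / d\<^sup>2 + 4 * k / d ^ 3 * (u \<bullet> u)))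
       = - 4 * d\<^sup>2 / (k * (1 + 3 * (u \<bullet> u)))"
    unfolding s sum using d k by (simp_all add: field_simps power2_eq_square power3_eq_cube)
  show "matrix_inv (amat rho u) = ((1 - u \<bullet> u)\<^sup>2 / amat_prefactor rho) *\<^sub>R idm
           + (- 4 * (1 - u \<bullet> u)\<^sup>2 / (amat_prefactor rho * (1 + 3 * (u \<bullet> u)))) *\<^sub>R outer u u"
    and "matrix_inv (amat rho u) ** amat rho u = mat 1"
    using matrix_inv_idm_outer[OF ne] coeff
    unfolding amat_idm_outer[OF u] by (simp_all add: d_def k_def)
qed

lemma mmat_idm_outer:
  assumes u: "norm u < 1"
  shows "mmat rho u = (gam u + 3 * m_e rho * phi_powser (u \<bullet> u)) *\<^sub>R idm
                      + (gam u ^ 3 + 6 * m_e rho * phi_powser' (u \<bullet> u)) *\<^sub>R outer u u"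
proof (cases "u = 0")
  case True
  have "phi_powser 0 = 1 / 3"
    using powser_zero[of phi_coeff] by (simp add: phi_powser_def phi_coeff_def)
  moreover have "outer 0 0 = 0"
    by (simp add: outer_def vec_eq_iff)
  ultimately show ?thesis
    using True by (simp add: mmat_def m0_def mf_def phi_def scaleR_add_left)
next
  case False
  then have s: "0 < norm u" "norm u < 1" using u by auto
  have "phi (norm u) = phi_powser (u \<bullet> u)" "deriv phi (norm u) / norm u = 2 * phi_powser' (u \<bullet> u)"
    using phi_eq_phi_powser[OF s] deriv_phi_eq[OF s] s by (simp_all add: dot_square_norm)
  then show ?thesis
    by (simp add: mmat_def m0_def mf_def algebra_simps)
qed

lemma norm_matrix_inv_amat_le:
  assumes u: "norm u < 1" and charge: "charge rho \<noteq> 0"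
  shows "norm (matrix_inv (amat rho u) *v w) \<le> 2 / amat_prefactor rho * norm w"
proof -
  define s where "s = u \<bullet> u"
  have s: "0 \<le> s" "s < 1" using inner_self_less_1[OF u] by (simp_all add: s_def)
  have k: "0 < amat_prefactor rho" by (rule amat_prefactor_pos[OF charge])
  have "\<bar>(1 - s)\<^sup>2 / amat_prefactor rho\<bar> + \<bar>- 4 * (1 - s)\<^sup>2 / (amat_prefactor rho * (1 + 3 * s))\<bar> * s
      = (1 - s)\<^sup>2 * (1 + 4 * s / (1 + 3 * s)) / amat_prefactor rho"
    using s k by (simp add: abs_mult add_divide_distrib distrib_left mult.commute)
  also have "\<dots> \<le> 1 * 2 / amat_prefactor rho"
    using s k by (intro divide_right_mono mult_mono) (auto simp: power_le_one)
  finally have "\<bar>(1 - s)\<^sup>2 / amat_prefactor rho\<bar> + \<bar>- 4 * (1 - s)\<^sup>2 / (amat_prefactor rho * (1 + 3 * s))\<bar> * s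
      \<le> 2 / amat_prefactor rho" by simp
  then show ?thesis
    using norm_idm_outer_mv_le[of _ _ u w] order_trans mult_right_mono[OF _ norm_ge_zero]
    unfolding matrix_inv_amat[OF u charge] s_def by blast
qed

lemma inner_matrix_inv_amat_mmat_ge:
  assumes u: "norm u \<le> ub" and ub: "ub < 1" and charge: "charge rho \<noteq> 0"
  shows "(1 - ub\<^sup>2) ^ 3 / (4 * amat_prefactor rho) * (z \<bullet> z)
           \<le> z \<bullet> (matrix_inv (amat rho u) *v (mmat rho u *v z))"
proof -
  define s where "s = u \<bullet> u"
  define k where "k = amat_prefactor rho"
  define a where "a = (1 - s)\<^sup>2 / k"
  define b where "b = - 4 * (1 - s)\<^sup>2 / (k * (1 + 3 * s))"
  define a' where "a' = gam u + 3 * m_e rho * phi_powser s"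
  define b' where "b' = gam u ^ 3 + 6 * m_e rho * phi_powser' s"
  have u1: "norm u < 1" using u ub by simp
  have s: "0 \<le> s" "s \<le> ub\<^sup>2" "s < 1"
    using u inner_self_less_1[OF u1] by (simp_all add: s_def dot_square_norm power_mono)
  have k: "0 < k" using amat_prefactor_pos[OF charge] by (simp add: k_def)
  have "0 \<le> ub" using u norm_ge_zero[of u] by linarith
  then have ub2: "ub\<^sup>2 \<le> 1" using ub by (simp add: power_le_one)
  have "1 \<le> gam u" "0 \<le> m_e rho * phi_powser s" "0 \<le> m_e rho * phi_powser' s"
    using gam_ge_1[OF u1] m_e_nonneg[of rho] phi_powser_nonneg[OF s(1,3)] phi_powser'_nonneg[OF s(1,3)]
    by simp_all
  then have a': "1 \<le> a'" and b': "0 \<le> b'"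
    by (simp_all add: a'_def b'_def mult.assoc add_nonneg_nonneg)
  have "(1 - ub\<^sup>2) ^ 3 / (4 * k) \<le> (1 - s) ^ 3 / (k * (1 + 3 * s))"
    using s k ub2 by (intro frac_le mult_left_mono power_mono) auto
  also have "(1 - s) ^ 3 / (k * (1 + 3 * s)) = a + b * s"
    using s k by (simp add: a_def b_def divide_simps) (simp add: algebra_simps power2_eq_square power3_eq_cube)
  finally have along: "(1 - ub\<^sup>2) ^ 3 / (4 * k) \<le> a + b * s" .
  moreover have "b * s \<le> 0"
    using s k by (simp add: b_def mult_nonpos_nonneg)
  moreover have "0 \<le> (1 - ub\<^sup>2) ^ 3 / (4 * k)" using k ub2 by simp
  ultimately have "(1 - ub\<^sup>2) ^ 3 / (4 * k) * (z \<bullet> z) \<le> z \<bullet> ((matrix_inv (amat rho u) ** mmat rho u) *v z)"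
    using a' b' s unfolding matrix_inv_amat[OF u1 charge] mmat_idm_outer[OF u1]
    by (intro inner_idm_outer_mult_ge[of _ a b u a' b', unfolded a_def b_def a'_def b'_def s_def k_def])
       (auto simp: a_def b_def a'_def b'_def s_def k_def add_increasing2)
  then show ?thesis
    by (simp add: k_def matrix_vector_mul_assoc)
qed

section \<open>The first-order system\<close>

definition jerk ::
  "real \<Rightarrow> (real^3 \<Rightarrow> real^3^3) \<Rightarrow> (real^3 \<Rightarrow> real^3^3) \<Rightarrow> (real^3 \<Rightarrow> real^3 \<Rightarrow> real^3)
   \<Rightarrow> (real^3 \<Rightarrow> real^3) \<Rightarrow> real^3 \<Rightarrow> real^3 \<Rightarrow> real^3 \<Rightarrow> real^3" where
  "jerk eps A M B G r u y = (1 / eps) *\<^sub>R (matrix_inv (A u) *v (M u *v y + G r - eps *\<^sub>R B u y))"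

definition first_order_field ::
  "real \<Rightarrow> (real^3 \<Rightarrow> real^3^3) \<Rightarrow> (real^3 \<Rightarrow> real^3^3) \<Rightarrow> (real^3 \<Rightarrow> real^3 \<Rightarrow> real^3)
   \<Rightarrow> (real^3 \<Rightarrow> real^3) \<Rightarrow> (real^3) \<times> (real^3) \<times> (real^3) \<Rightarrow> (real^3) \<times> (real^3) \<times> (real^3)" where
  "first_order_field eps A M B G = (\<lambda>(r, u, y). (u, y, jerk eps A M B G r u y))"

lemma jerk_of_effective_equation:
  assumes eps: "eps \<noteq> 0" and u: "norm u < 1" and charge: "charge rho \<noteq> 0"
    and eq: "mmat rho u *v y = - G r + eps *\<^sub>R (amat rho u *v y') + eps *\<^sub>R bvec rho u y"
  shows "jerk eps (amat rho) (mmat rho) (bvec rho) G r u y = y'"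
proof -
  have "mmat rho u *v y + G r - eps *\<^sub>R bvec rho u y = eps *\<^sub>R (amat rho u *v y')"
    using eq by (simp add: algebra_simps)
  then show ?thesis
    using eps matrix_inv_amat(2)[OF u charge]
    by (simp add: jerk_def matrix_vector_mult_scaleR matrix_vector_mul_assoc)
qed

lemma jerk_diff:
  assumes "eps \<noteq> 0"
  shows "jerk eps A M B G r u y - jerk eps A M B G r u y'
    = (1 / eps) *\<^sub>R (matrix_inv (A u) *v (M u *v (y - y'))) - matrix_inv (A u) *v (B u y - B u y')"
  using assms by (simp add: jerk_def algebra_simps)

lemma inner_jerk_diff_ge:
  assumes eps: "0 < eps" and u: "norm u \<le> ub" and ub: "ub < 1" and charge: "charge rho \<noteq> 0"
    and B: "norm (bvec rho u y - bvec rho u y') \<le> K * norm (y - y')"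
  shows "((1 - ub\<^sup>2) ^ 3 / (4 * amat_prefactor rho * eps) - 2 * K / amat_prefactor rho) * ((y - y') \<bullet> (y - y'))
           \<le> (y - y') \<bullet> (jerk eps (amat rho) (mmat rho) (bvec rho) G r u y
                          - jerk eps (amat rho) (mmat rho) (bvec rho) G r u y')"
proof -
  define z where "z = y - y'"
  define N where "N = matrix_inv (amat rho u)"
  have k: "0 < amat_prefactor rho" by (rule amat_prefactor_pos[OF charge])
  have "(1 - ub\<^sup>2) ^ 3 / (4 * amat_prefactor rho) * (z \<bullet> z) \<le> z \<bullet> (N *v (mmat rho u *v z))"
    unfolding N_def by (rule inner_matrix_inv_amat_mmat_ge[OF u ub charge])
  then have "(1 - ub\<^sup>2) ^ 3 / (4 * amat_prefactor rho) * (z \<bullet> z) / eps \<le> z \<bullet> (N *v (mmat rho u *v z)) / eps"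
    by (rule divide_right_mono) (use eps in simp)
  then have "(1 - ub\<^sup>2) ^ 3 / (4 * amat_prefactor rho * eps) * (z \<bullet> z) \<le> z \<bullet> ((1 / eps) *\<^sub>R (N *v (mmat rho u *v z)))"
    by (simp add: mult.commute)
  moreover have "z \<bullet> (N *v (bvec rho u y - bvec rho u y')) \<le> 2 * K / amat_prefactor rho * (z \<bullet> z)"
  proof -
    have "z \<bullet> (N *v (bvec rho u y - bvec rho u y')) \<le> norm z * (2 / amat_prefactor rho * norm (bvec rho u y - bvec rho u y'))"
      unfolding N_def using u ub norm_matrix_inv_amat_le[OF _ charge]
      by (intro order_trans[OF norm_cauchy_schwarz] mult_left_mono) auto
    also have "\<dots> \<le> norm z * (2 / amat_prefactor rho * (K * norm z))"
      using B k by (intro mult_left_mono) (auto simp: z_def)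
    finally show ?thesis by (simp add: dot_square_norm power2_eq_square mult_ac)
  qed
  ultimately show ?thesis
    using eps unfolding jerk_diff[OF eps[THEN less_imp_neq, symmetric]]
    by (simp add: z_def N_def inner_diff_right left_diff_distrib)
qed

section \<open>Bounded Lipschitz functions\<close>

definition bounded_lipschitz_on :: "'a::metric_space set \<Rightarrow> ('a \<Rightarrow> 'b::real_normed_vector) \<Rightarrow> bool" where
  "bounded_lipschitz_on S f \<longleftrightarrow> (\<exists>L. L-lipschitz_on S f) \<and> bounded (f ` S)"

lemma bounded_lipschitz_onI:
  "L-lipschitz_on S f \<Longrightarrow> (\<And>x. x \<in> S \<Longrightarrow> norm (f x) \<le> B) \<Longrightarrow> bounded_lipschitz_on S f"
  unfolding bounded_lipschitz_on_def bounded_iff by auto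

lemma bounded_lipschitz_onE:
  assumes "bounded_lipschitz_on S f"
  obtains L B where "L-lipschitz_on S f" "\<And>x. x \<in> S \<Longrightarrow> norm (f x) \<le> B"
  using assms unfolding bounded_lipschitz_on_def bounded_iff by auto

lemma bounded_lipschitz_on_const: "bounded_lipschitz_on S (\<lambda>x. c)"
  by (rule bounded_lipschitz_onI[OF lipschitz_on_constant, of _ _ "norm c"]) simp

lemma bounded_lipschitz_on_ident: "bounded S \<Longrightarrow> bounded_lipschitz_on S (\<lambda>x. x)"
  unfolding bounded_lipschitz_on_def by (auto intro: lipschitz_on_id)

lemma bounded_lipschitz_on_compose:
  assumes f: "bounded_lipschitz_on S f" and "f ` S \<subseteq> T" and g: "bounded_lipschitz_on T g"
  shows "bounded_lipschitz_on S (\<lambda>x. g (f x))"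
proof -
  obtain L where "L-lipschitz_on S f" using f by (auto simp: bounded_lipschitz_on_def)
  moreover obtain M where "M-lipschitz_on T g" using g by (auto simp: bounded_lipschitz_on_def)
  ultimately have "(M * L)-lipschitz_on S (\<lambda>x. g (f x))"
    using \<open>f ` S \<subseteq> T\<close> by (intro lipschitz_on_compose2) (auto intro: lipschitz_on_subset)
  moreover have "bounded ((\<lambda>x. g (f x)) ` S)"
    using g \<open>f ` S \<subseteq> T\<close> by (auto simp: bounded_lipschitz_on_def image_image intro: bounded_subset)
  ultimately show ?thesis by (auto simp: bounded_lipschitz_on_def)
qed

lemma bounded_lipschitz_on_linear:
  assumes "bounded_linear g" and f: "bounded_lipschitz_on S f"
  shows "bounded_lipschitz_on S (\<lambda>x. g (f x))"
proof -
  obtain M where "M-lipschitz_on (f ` S) g"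
    using bounded_linear.lipschitz_boundE[OF assms(1)] by blast
  then show ?thesis
    using f bounded_linear_image[OF _ assms(1), of "f ` S"]
    by (auto simp: bounded_lipschitz_on_def image_image intro: lipschitz_on_compose2)
qed

lemma bounded_lipschitz_on_add:
  assumes "bounded_lipschitz_on S f" "bounded_lipschitz_on S g"
  shows "bounded_lipschitz_on S (\<lambda>x. f x + g x)"
  using assms by (auto simp: bounded_lipschitz_on_def intro: lipschitz_on_add bounded_plus_comp)

lemma bounded_lipschitz_on_diff:
  assumes "bounded_lipschitz_on S f" "bounded_lipschitz_on S g"
  shows "bounded_lipschitz_on S (\<lambda>x. f x - g x)"
  using bounded_lipschitz_on_add[OF assms(1) bounded_lipschitz_on_linear[OF bounded_linear_minus[OF bounded_linear_ident] assms(2)]]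
  by simp

lemma bounded_lipschitz_on_Pair:
  fixes f :: "'a::metric_space \<Rightarrow> 'b::real_normed_vector" and g :: "'a \<Rightarrow> 'c::real_normed_vector"
  assumes "bounded_lipschitz_on S f" "bounded_lipschitz_on S g"
  shows "bounded_lipschitz_on S (\<lambda>x. (f x, g x))"
proof -
  have "(\<lambda>x. (f x, g x)) ` S \<subseteq> f ` S \<times> g ` S" by auto
  then show ?thesis
    using assms by (auto simp: bounded_lipschitz_on_def intro: lipschitz_on_Pair bounded_subset bounded_Times)
qed

lemma bounded_lipschitz_on_bilinear:
  assumes "bounded_bilinear bil" and f: "bounded_lipschitz_on S f" and g: "bounded_lipschitz_on S g"
  shows "bounded_lipschitz_on S (\<lambda>x. bil (f x) (g x))"
proof -
  interpret bounded_bilinear bil by fact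
  obtain K where K: "\<And>a b. norm (bil a b) \<le> norm a * norm b * K" "0 \<le> K"
    using nonneg_bounded by blast
  obtain L1 B1 where L1: "L1-lipschitz_on S f" and B1: "\<And>x. x \<in> S \<Longrightarrow> norm (f x) \<le> B1"
    using f bounded_lipschitz_onE by metis
  obtain L2 B2 where L2: "L2-lipschitz_on S g" and B2: "\<And>x. x \<in> S \<Longrightarrow> norm (g x) \<le> B2"
    using g bounded_lipschitz_onE by metis
  have "(K * (L1 * max B2 0 + max B1 0 * L2))-lipschitz_on S (\<lambda>x. bil (f x) (g x))"
  proof (rule lipschitz_onI)
    fix x y assume xy: "x \<in> S" "y \<in> S"
    have "dist (bil (f x) (g x)) (bil (f y) (g y)) = norm (bil (f x - f y) (g x) + bil (f y) (g x - g y))"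
      by (simp add: dist_norm diff_left diff_right)
    also have "\<dots> \<le> norm (f x - f y) * norm (g x) * K + norm (f y) * norm (g x - g y) * K"
      using K by (intro norm_triangle_le add_mono) auto
    also have "\<dots> \<le> (L1 * dist x y) * max B2 0 * K + max B1 0 * (L2 * dist x y) * K"
      using lipschitz_onD[OF L1 xy] lipschitz_onD[OF L2 xy] B1[of y] B2[of x] xy K
        lipschitz_on_nonneg[OF L1] lipschitz_on_nonneg[OF L2]
      by (intro add_mono mult_right_mono mult_mono) (auto simp: dist_norm)
    finally show "dist (bil (f x) (g x)) (bil (f y) (g y)) \<le> K * (L1 * max B2 0 + max B1 0 * L2) * dist x y"
      by (simp add: algebra_simps)
  qed (use K lipschitz_on_nonneg[OF L1] lipschitz_on_nonneg[OF L2] in simp)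
  moreover have "norm (bil (f x) (g x)) \<le> max B1 0 * max B2 0 * K" if "x \<in> S" for x
    using B1[OF that] B2[OF that] K(2)
    by (intro order_trans[OF K(1)] mult_right_mono mult_mono) auto
  ultimately show ?thesis by (rule bounded_lipschitz_onI)
qed

lemmas bounded_lipschitz_on_scaleR = bounded_lipschitz_on_bilinear[OF bounded_bilinear_scaleR]
lemmas bounded_lipschitz_on_mult = bounded_lipschitz_on_bilinear[OF bounded_bilinear_mult]
lemmas bounded_lipschitz_on_inner = bounded_lipschitz_on_bilinear[OF bounded_bilinear_inner]

lemma bounded_lipschitz_on_power:
  fixes f :: "'a::metric_space \<Rightarrow> real"
  shows "bounded_lipschitz_on S f \<Longrightarrow> bounded_lipschitz_on S (\<lambda>x. f x ^ n)"
  by (induction n) (simp_all add: bounded_lipschitz_on_const bounded_lipschitz_on_mult)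

lemma bounded_lipschitz_on_real_interval:
  fixes g g' :: "real \<Rightarrow> real"
  assumes g': "\<And>x. x \<in> {a..b} \<Longrightarrow> (g has_real_derivative g' x) (at x)"
    and cont: "continuous_on {a..b} g'"
  shows "bounded_lipschitz_on {a..b} g"
proof -
  obtain B where B: "\<forall>x\<in>{a..b}. \<bar>g' x\<bar> \<le> B"
    using compact_imp_bounded[OF compact_continuous_image[OF cont compact_Icc]]
    by (auto simp: bounded_iff)
  have "continuous_on {a..b} g"
    using g' by (meson DERIV_isCont continuous_at_imp_continuous_on)
  note this[THEN compact_continuous_image[OF _ compact_Icc], THEN compact_imp_bounded]
  then obtain C where C: "\<forall>x\<in>{a..b}. norm (g x) \<le> C"
    by (auto simp: bounded_iff)
  have "(max B 0)-lipschitz_on {a..b} g"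
  proof (rule bounded_derivative_imp_lipschitz)
    show "(g has_derivative (\<lambda>h. g' x * h)) (at x within {a..b})" if "x \<in> {a..b}" for x
      using g'[OF that] by (auto simp: has_field_derivative_def intro: has_derivative_at_withinI)
    show "onorm (\<lambda>h. g' x * h) \<le> max B 0" if "x \<in> {a..b}" for x
      using B that by (intro onorm_le) (force simp: abs_mult intro!: mult_right_mono)
  qed auto
  then show ?thesis using C by (intro bounded_lipschitz_onI) auto
qed

lemma bounded_lipschitz_on_inverse:
  fixes f :: "'a::metric_space \<Rightarrow> real"
  assumes f: "bounded_lipschitz_on S f" and m: "0 < m" "\<And>x. x \<in> S \<Longrightarrow> m \<le> f x"
  shows "bounded_lipschitz_on S (\<lambda>x. 1 / f x)"
proof -
  obtain B where B: "\<And>x. x \<in> S \<Longrightarrow> norm (f x) \<le> B"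
    using f bounded_lipschitz_onE by metis
  have "bounded_lipschitz_on {m..max m B} (\<lambda>y. 1 / y)"
    using m(1) by (intro bounded_lipschitz_on_real_interval[where g' = "\<lambda>y. - 1 / y\<^sup>2"])
      (auto intro!: derivative_eq_intros continuous_intros simp: power2_eq_square field_simps)
  moreover have "f ` S \<subseteq> {m..max m B}"
    using m B by force
  ultimately show ?thesis
    using bounded_lipschitz_on_compose[OF f] by blast
qed

lemma bounded_lipschitz_on_powser:
  fixes c :: "nat \<Rightarrow> real"
  assumes summable: "\<And>x. \<bar>x\<bar> < 1 \<Longrightarrow> summable (\<lambda>n. c n * x ^ n)" and ab: "-1 < a" "b < 1"
  shows "bounded_lipschitz_on {a..b} (\<lambda>x. \<Sum>n. c n * x ^ n)"
proof -
  have summable': "\<And>x. \<bar>x\<bar> < 1 \<Longrightarrow> summable (\<lambda>n. diffs c n * x ^ n)"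
    using termdiff_converges[of _ 1 c] summable by simp
  have x1: "\<bar>x\<bar> < 1" if "x \<in> {a..b}" for x
    using that ab by auto
  show ?thesis
  proof (rule bounded_lipschitz_on_real_interval)
    show "((\<lambda>x. \<Sum>n. c n * x ^ n) has_real_derivative (\<Sum>n. diffs c n * x ^ n)) (at x)"
      if "x \<in> {a..b}" for x
      using termdiffs_strong'[of 1 c x] summable x1[OF that] by simp
    have "isCont (\<lambda>x. \<Sum>n. diffs c n * x ^ n) x" if "x \<in> {a..b}" for x
      using termdiffs_strong'[of 1 "diffs c" x] summable' x1[OF that] by (auto intro: DERIV_isCont)
    then show "continuous_on {a..b} (\<lambda>x. \<Sum>n. diffs c n * x ^ n)"
      by (simp add: continuous_at_imp_continuous_on)
  qed
qed

lemma bounded_lipschitz_on_inverse_sqrt_one_minus: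
  assumes "0 \<le> X" "X < 1"
  shows "bounded_lipschitz_on {0..X} (\<lambda>x. 1 / sqrt (1 - x))"
  using assms
  by (intro bounded_lipschitz_on_real_interval[where g' = "\<lambda>x. 1 / (2 * (1 - x) * sqrt (1 - x))"])
     (auto intro!: derivative_eq_intros continuous_intros simp: field_simps power2_eq_square)

lemma bounded_lipschitz_on_cong:
  "bounded_lipschitz_on S g \<Longrightarrow> (\<And>x. x \<in> S \<Longrightarrow> f x = g x) \<Longrightarrow> bounded_lipschitz_on S f"
  unfolding bounded_lipschitz_on_def by (metis image_cong lipschitz_on_cong)

lemma bounded_lipschitz_on_idm_outer_mv:
  assumes "bounded_lipschitz_on S a" "bounded_lipschitz_on S b"
    and "bounded_lipschitz_on S U" "bounded_lipschitz_on S W"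
  shows "bounded_lipschitz_on S (\<lambda>x. (a x *\<^sub>R idm + b x *\<^sub>R outer (U x) (U x)) *v W x)"
  unfolding idm_outer_mv using assms
  by (intro bounded_lipschitz_on_add bounded_lipschitz_on_scaleR bounded_lipschitz_on_mult
      bounded_lipschitz_on_inner)

context
  fixes S :: "'a::metric_space set" and U :: "'a \<Rightarrow> real^3" and u1 :: real
  assumes U: "bounded_lipschitz_on S U" and U_bound: "\<And>x. x \<in> S \<Longrightarrow> norm (U x) \<le> u1"
    and u1: "0 \<le> u1" "u1 < 1"
begin

lemma bounded_lipschitz_on_scalar_coeffs:
  shows "bounded_lipschitz_on S (\<lambda>x. U x \<bullet> U x)"
    and "bounded_lipschitz_on S (\<lambda>x. gam (U x))"
    and "bounded_lipschitz_on S (\<lambda>x. phi_powser (U x \<bullet> U x))"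
    and "bounded_lipschitz_on S (\<lambda>x. phi_powser' (U x \<bullet> U x))"
proof -
  have X: "0 \<le> u1\<^sup>2" "u1\<^sup>2 < 1" using u1 by (simp_all add: power_less_one_iff)
  show s: "bounded_lipschitz_on S (\<lambda>x. U x \<bullet> U x)"
    by (rule bounded_lipschitz_on_inner[OF U U])
  have range: "(\<lambda>x. U x \<bullet> U x) ` S \<subseteq> {0..u1\<^sup>2}"
    using U_bound by (auto simp: dot_square_norm power_mono)
  show "bounded_lipschitz_on S (\<lambda>x. gam (U x))"
    unfolding gam_eq using X
    by (intro bounded_lipschitz_on_compose[OF s range] bounded_lipschitz_on_inverse_sqrt_one_minus)
  show "bounded_lipschitz_on S (\<lambda>x. phi_powser (U x \<bullet> U x))"
    unfolding phi_powser_def using X summable_phi_coeff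
    by (intro bounded_lipschitz_on_compose[OF s range] bounded_lipschitz_on_powser) auto
  show "bounded_lipschitz_on S (\<lambda>x. phi_powser' (U x \<bullet> U x))"
    unfolding phi_powser'_def using X summable_diffs_phi_coeff
    by (intro bounded_lipschitz_on_compose[OF s range] bounded_lipschitz_on_powser) auto
qed

lemma bounded_lipschitz_on_bvec:
  assumes W: "bounded_lipschitz_on S W"
  shows "bounded_lipschitz_on S (\<lambda>x. bvec rho (U x) (W x))"
proof -
  note gam = bounded_lipschitz_on_scalar_coeffs(2)
  note const = bounded_lipschitz_on_const
  have uw: "bounded_lipschitz_on S (\<lambda>x. U x \<bullet> W x)" and ww: "bounded_lipschitz_on S (\<lambda>x. W x \<bullet> W x)"
    using U W by (simp_all add: bounded_lipschitz_on_inner)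
  have "bounded_lipschitz_on S (\<lambda>x. (2 * gam (U x) ^ 6 * (U x \<bullet> W x)) *\<^sub>R W x)"
    by (intro bounded_lipschitz_on_scaleR bounded_lipschitz_on_mult bounded_lipschitz_on_power gam uw W const)
  moreover have "bounded_lipschitz_on S (\<lambda>x. (gam (U x) ^ 6 * (W x \<bullet> W x)) *\<^sub>R U x)"
    by (intro bounded_lipschitz_on_scaleR bounded_lipschitz_on_mult bounded_lipschitz_on_power gam ww U)
  moreover have "bounded_lipschitz_on S (\<lambda>x. (6 * gam (U x) ^ 8 * (U x \<bullet> W x)\<^sup>2) *\<^sub>R U x)"
    by (intro bounded_lipschitz_on_scaleR bounded_lipschitz_on_mult bounded_lipschitz_on_power gam uw U const)
  ultimately show ?thesis
    unfolding bvec_def power2_norm_eq_inner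
    by (intro bounded_lipschitz_on_scaleR[OF const] bounded_lipschitz_on_add)
qed

lemma bounded_lipschitz_on_mmat_mv:
  assumes W: "bounded_lipschitz_on S W"
  shows "bounded_lipschitz_on S (\<lambda>x. mmat rho (U x) *v W x)"
proof (rule bounded_lipschitz_on_cong)
  note coeffs = bounded_lipschitz_on_scalar_coeffs and const = bounded_lipschitz_on_const
  have "bounded_lipschitz_on S (\<lambda>x. gam (U x) + 3 * m_e rho * phi_powser (U x \<bullet> U x))"
    by (intro bounded_lipschitz_on_add bounded_lipschitz_on_mult coeffs const)
  moreover have "bounded_lipschitz_on S (\<lambda>x. gam (U x) ^ 3 + 6 * m_e rho * phi_powser' (U x \<bullet> U x))"
    by (intro bounded_lipschitz_on_add bounded_lipschitz_on_mult bounded_lipschitz_on_power coeffs const)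
  ultimately show "bounded_lipschitz_on S (\<lambda>x. ((gam (U x) + 3 * m_e rho * phi_powser (U x \<bullet> U x)) *\<^sub>R idm
      + (gam (U x) ^ 3 + 6 * m_e rho * phi_powser' (U x \<bullet> U x)) *\<^sub>R outer (U x) (U x)) *v W x)"
    by (intro bounded_lipschitz_on_idm_outer_mv U W)
  show "mmat rho (U x) *v W x = ((gam (U x) + 3 * m_e rho * phi_powser (U x \<bullet> U x)) *\<^sub>R idm
      + (gam (U x) ^ 3 + 6 * m_e rho * phi_powser' (U x \<bullet> U x)) *\<^sub>R outer (U x) (U x)) *v W x"
    if "x \<in> S" for x
    using U_bound[OF that] u1 by (simp add: mmat_idm_outer)
qed

lemma bounded_lipschitz_on_matrix_inv_amat_mv:
  assumes W: "bounded_lipschitz_on S W" and charge: "charge rho \<noteq> 0"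
  shows "bounded_lipschitz_on S (\<lambda>x. matrix_inv (amat rho (U x)) *v W x)"
proof (rule bounded_lipschitz_on_cong)
  define s where "s x = U x \<bullet> U x" for x
  note const = bounded_lipschitz_on_const
  have s: "bounded_lipschitz_on S s"
    unfolding s_def by (rule bounded_lipschitz_on_scalar_coeffs(1))
  have "bounded_lipschitz_on S (\<lambda>x. 1 + 3 * s x)"
    by (intro bounded_lipschitz_on_add[OF const] bounded_lipschitz_on_mult[OF const] s)
  then have "bounded_lipschitz_on S (\<lambda>x. 1 / (1 + 3 * s x))"
    by (rule bounded_lipschitz_on_inverse[of _ _ 1]) (simp_all add: s_def)
  then have "bounded_lipschitz_on S (\<lambda>x. (1 - s x)\<^sup>2 / amat_prefactor rho)"
    "bounded_lipschitz_on S (\<lambda>x. - 4 * (1 - s x)\<^sup>2 / (amat_prefactor rho * (1 + 3 * s x)))"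
    unfolding divide_inverse inverse_mult_distrib
    by (intro bounded_lipschitz_on_mult bounded_lipschitz_on_power bounded_lipschitz_on_diff const s
        | simp add: divide_inverse)+
  then show "bounded_lipschitz_on S (\<lambda>x. (((1 - s x)\<^sup>2 / amat_prefactor rho) *\<^sub>R idm
      + (- 4 * (1 - s x)\<^sup>2 / (amat_prefactor rho * (1 + 3 * s x))) *\<^sub>R outer (U x) (U x)) *v W x)"
    by (intro bounded_lipschitz_on_idm_outer_mv U W)
  show "matrix_inv (amat rho (U x)) *v W x = (((1 - s x)\<^sup>2 / amat_prefactor rho) *\<^sub>R idm
      + (- 4 * (1 - s x)\<^sup>2 / (amat_prefactor rho * (1 + 3 * s x))) *\<^sub>R outer (U x) (U x)) *v W x"
    if "x \<in> S" for x
    using U_bound[OF that] u1 by (simp add: matrix_inv_amat[OF _ charge] s_def)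
qed

end

lemma bounded_lipschitz_on_first_order_field:
  fixes S :: "((real^3) \<times> (real^3) \<times> (real^3)) set"
  assumes G: "bounded_lipschitz_on UNIV G" and charge: "charge rho \<noteq> 0" and S: "bounded S"
    and u_bound: "\<And>x. x \<in> S \<Longrightarrow> norm (fst (snd x)) \<le> u1" and u1: "0 \<le> u1" "u1 < 1"
  shows "bounded_lipschitz_on S (first_order_field eps (amat rho) (mmat rho) (bvec rho) G)"
proof -
  have id: "bounded_lipschitz_on S (\<lambda>x. x)" by (rule bounded_lipschitz_on_ident[OF S])
  have R: "bounded_lipschitz_on S (\<lambda>x. fst x)" and U: "bounded_lipschitz_on S (\<lambda>x. fst (snd x))"
    and Y: "bounded_lipschitz_on S (\<lambda>x. snd (snd x))"
    by (intro bounded_lipschitz_on_linear[OF _ id] bounded_linear_fst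
        bounded_linear_compose[OF bounded_linear_fst bounded_linear_snd]
        bounded_linear_compose[OF bounded_linear_snd bounded_linear_snd])+
  note U_lemmas = bounded_lipschitz_on_mmat_mv[OF U u_bound u1] bounded_lipschitz_on_bvec[OF U u_bound u1]
    bounded_lipschitz_on_matrix_inv_amat_mv[OF U u_bound u1]
  have "bounded_lipschitz_on S (\<lambda>x. G (fst x))"
    by (rule bounded_lipschitz_on_compose[OF R _ G]) simp
  then have "bounded_lipschitz_on S (\<lambda>x. jerk eps (amat rho) (mmat rho) (bvec rho) G (fst x) (fst (snd x)) (snd (snd x)))"
    unfolding jerk_def
    by (intro bounded_lipschitz_on_scaleR[OF bounded_lipschitz_on_const] U_lemmas charge
        bounded_lipschitz_on_diff bounded_lipschitz_on_add bounded_lipschitz_on_scaleR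
        bounded_lipschitz_on_const Y)
  then show ?thesis
    unfolding first_order_field_def split_beta by (intro bounded_lipschitz_on_Pair U Y)
qed

lemma bounded_lipschitz_on_UNIV_of_bounded_derivative:
  fixes f :: "real^'n \<Rightarrow> real^'m" and f' :: "real^'n \<Rightarrow> real^'n^'m"
  assumes f': "\<And>x. (f has_derivative (\<lambda>k. f' x *v k)) (at x)"
    and bounded: "\<And>x. norm (f x) \<le> B" "\<And>x. norm (f' x) \<le> B"
  shows "bounded_lipschitz_on UNIV f"
proof (rule bounded_lipschitz_onI)
  have "0 \<le> B" using bounded(2)[of 0] norm_ge_zero order_trans by blast
  have "\<bar>f' x $ i $ j\<bar> \<le> B" for x i j
    using component_le_norm_cart[of "f' x $ i" j] Finite_Cartesian_Product.norm_nth_le[of "f' x" i] bounded(2)[of x] by linarith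
  then have "onorm (\<lambda>k. f' x *v k) \<le> real CARD('m) * real CARD('n) * B" for x
    by (intro onorm_le_matrix_component)
  then show "(real CARD('m) * real CARD('n) * B)-lipschitz_on UNIV f"
    using f' \<open>0 \<le> B\<close> by (intro bounded_derivative_imp_lipschitz) auto
qed (use bounded in auto)

lemma bvec_lipschitz_in_second_argument:
  assumes "0 \<le> ub" "ub < 1"
  obtains K where "0 \<le> K"
    "\<And>v a b. norm v \<le> ub \<Longrightarrow> norm a \<le> R \<Longrightarrow> norm b \<le> R \<Longrightarrow>
        norm (bvec rho v a - bvec rho v b) \<le> K * norm (a - b)"
proof -
  define S where "S = {p :: (real^3) \<times> (real^3). norm (fst p) \<le> ub \<and> norm (snd p) \<le> R}"
  have "S \<subseteq> cball 0 ub \<times> cball 0 R" by (auto simp: S_def)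
  then have "bounded S" by (rule bounded_subset[OF bounded_Times[OF bounded_cball bounded_cball]])
  then have "bounded_lipschitz_on S (\<lambda>x. x)" by (rule bounded_lipschitz_on_ident)
  then have "bounded_lipschitz_on S (\<lambda>p. bvec rho (fst p) (snd p))"
    using assms
    by (intro bounded_lipschitz_on_bvec bounded_lipschitz_on_linear[OF bounded_linear_fst]
        bounded_lipschitz_on_linear[OF bounded_linear_snd]) (auto simp: S_def)
  then obtain K where K: "K-lipschitz_on S (\<lambda>p. bvec rho (fst p) (snd p))"
    by (auto simp: bounded_lipschitz_on_def)
  show ?thesis
  proof
    show "0 \<le> K" using K lipschitz_on_nonneg by blast
    fix v a b :: "real^3"
    assume "norm v \<le> ub" "norm a \<le> R" "norm b \<le> R"
    then have "dist (bvec rho v a) (bvec rho v b) \<le> K * dist (v, a) (v, b)"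
      using lipschitz_onD[OF K, of "(v, a)" "(v, b)"] by (simp add: S_def)
    then show "norm (bvec rho v a - bvec rho v b) \<le> K * norm (a - b)"
      by (simp add: dist_norm dist_Pair_Pair)
  qed
qed

section \<open>Local solutions of Lipschitz ODEs\<close>

text \<open>The Picard operator, with time clamped to \<open>[0, d]\<close> so that it acts on bounded continuous functions.\<close>
definition picard_operator :: "('a::banach \<Rightarrow> 'a) \<Rightarrow> 'a \<Rightarrow> real \<Rightarrow> (real \<Rightarrow>\<^sub>C 'a) \<Rightarrow> real \<Rightarrow> 'a" where
  "picard_operator F x0 d x t = x0 + integral {0..max 0 (min d t)} (\<lambda>s. F (apply_bcontfun x s))"

context
  fixes F :: "'a::banach \<Rightarrow> 'a" and L K d :: real
  assumes lip: "L-lipschitz_on UNIV F" and F_bound: "\<And>x. norm (F x) \<le> K" and d: "0 < d"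
begin

lemma continuous_on_lipschitz_field_bcontfun: "continuous_on S (\<lambda>s. F (apply_bcontfun x s))"
  using lipschitz_on_continuous_on[OF lip] by (rule continuous_on_compose2) auto

lemma picard_operator_bcontfun: "picard_operator F x0 d x \<in> bcontfun"
proof (rule bcontfun_normI)
  have "continuous_on {0..d} (\<lambda>t. integral {0..t} (\<lambda>s. F (apply_bcontfun x s)))"
    by (intro indefinite_integral_continuous_1 integrable_continuous_interval continuous_on_lipschitz_field_bcontfun)
  then have "continuous_on UNIV (\<lambda>t. integral {0..max 0 (min d t)} (\<lambda>s. F (apply_bcontfun x s)))"
    by (rule continuous_on_compose2[of _ _ _ "\<lambda>t. max 0 (min d t)"]) (use d in \<open>auto intro!: continuous_intros\<close>)
  then show "continuous_on UNIV (picard_operator F x0 d x)"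
    unfolding picard_operator_def by (intro continuous_intros)
  fix t
  have "K \<ge> 0" using F_bound[of x0] norm_ge_zero order_trans by blast
  have "norm (integral {0..max 0 (min d t)} (\<lambda>s. F (apply_bcontfun x s))) \<le> K * (max 0 (min d t) - 0)"
    by (rule integral_bound) (auto intro: continuous_on_lipschitz_field_bcontfun F_bound)
  also have "\<dots> \<le> K * d" using d \<open>K \<ge> 0\<close> by (intro mult_left_mono) auto
  finally show "norm (picard_operator F x0 d x t) \<le> norm x0 + K * d"
    unfolding picard_operator_def by (meson add_left_mono norm_triangle_ineq order_trans)
qed

lemma picard_operator_contraction:
  "dist (Bcontfun (picard_operator F x0 d x)) (Bcontfun (picard_operator F x0 d y)) \<le> (d * L) * dist x y"
proof (rule dist_bound)
  fix t
  define t' where "t' = max 0 (min d t)"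
  have t': "0 \<le> t'" "t' \<le> d" using d by (auto simp: t'_def)
  have L0: "0 \<le> L" using lip lipschitz_on_nonneg by blast
  have "dist (Bcontfun (picard_operator F x0 d x) t) (Bcontfun (picard_operator F x0 d y) t)
      = norm (integral {0..t'} (\<lambda>s. F (apply_bcontfun x s) - F (apply_bcontfun y s)))"
    unfolding Bcontfun_inverse[OF picard_operator_bcontfun] picard_operator_def dist_norm t'_def
    by (subst integral_diff) (auto intro!: integrable_continuous_interval continuous_on_lipschitz_field_bcontfun)
  also have "\<dots> \<le> (L * dist x y) * (t' - 0)"
  proof (rule integral_bound)
    fix s
    have "norm (F (apply_bcontfun x s) - F (apply_bcontfun y s)) \<le> L * dist (apply_bcontfun x s) (apply_bcontfun y s)"
      using lipschitz_onD[OF lip] by (simp add: dist_norm)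
    also have "\<dots> \<le> L * dist x y" using L0 dist_bounded by (intro mult_left_mono) auto
    finally show "norm (F (apply_bcontfun x s) - F (apply_bcontfun y s)) \<le> L * dist x y" .
  qed (use t' in \<open>auto intro!: continuous_intros continuous_on_lipschitz_field_bcontfun\<close>)
  also have "\<dots> \<le> (L * dist x y) * d" using t' L0 by (intro mult_left_mono) auto
  finally show "dist (Bcontfun (picard_operator F x0 d x) t) (Bcontfun (picard_operator F x0 d y) t)
      \<le> (d * L) * dist x y"
    by (simp add: algebra_simps)
qed

lemma lipschitz_ode_local_existence:
  assumes dL: "d * L < 1"
  obtains X where "X 0 = x0"
    "\<And>t. t \<in> {0..d} \<Longrightarrow> (X has_vector_derivative F (X t)) (at t within {0..d})"
    "\<And>t. t \<in> {0..d} \<Longrightarrow> norm (X t - x0) \<le> K * d"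
proof -
  have "0 \<le> L" using lip lipschitz_on_nonneg by blast
  then obtain x where fix_x: "Bcontfun (picard_operator F x0 d x) = x"
    using banach_fix_type[of "d * L" "\<lambda>x. Bcontfun (picard_operator F x0 d x)"] d dL picard_operator_contraction
    by auto
  define X where "X = apply_bcontfun x"
  have X_P: "X = picard_operator F x0 d x"
    unfolding X_def by (metis fix_x Bcontfun_inverse picard_operator_bcontfun)
  have X_eq: "X t = x0 + integral {0..t} (\<lambda>s. F (X s))" if "t \<in> {0..d}" for t
    using that by (subst X_P) (simp add: picard_operator_def X_def)
  have FX_cont: "continuous_on {0..d} (\<lambda>s. F (X s))"
    unfolding X_def by (rule continuous_on_lipschitz_field_bcontfun)
  show ?thesis
  proof
    show "X 0 = x0" using X_eq[of 0] d by simp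
    fix t assume t: "t \<in> {0..d}"
    have "((\<lambda>t. x0 + integral {0..t} (\<lambda>s. F (X s))) has_vector_derivative F (X t)) (at t within {0..d})"
      using has_vector_derivative_add[OF has_vector_derivative_const integral_has_vector_derivative[OF FX_cont t]]
      by simp
    then show "(X has_vector_derivative F (X t)) (at t within {0..d})"
      by (rule has_vector_derivative_transform_within[where d=1]) (use X_eq t in auto)
    have "K \<ge> 0" using F_bound[of x0] norm_ge_zero order_trans by blast
    have "norm (X t - x0) = norm (integral {0..t} (\<lambda>s. F (X s)))" using X_eq[OF t] by simp
    also have "\<dots> \<le> K * (t - 0)"
      by (rule integral_bound) (use t FX_cont F_bound in \<open>auto intro: continuous_on_subset\<close>)
    also have "\<dots> \<le> K * d" using t \<open>K \<ge> 0\<close> by (intro mult_left_mono) auto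
    finally show "norm (X t - x0) \<le> K * d" .
  qed
qed

end

lemma closest_point_cball_extension:
  fixes F :: "'a::euclidean_space \<Rightarrow> 'b::real_normed_vector"
  assumes r: "0 < r" and lip: "L-lipschitz_on (cball x0 r) F"
  shows "L-lipschitz_on UNIV (\<lambda>x. F (closest_point (cball x0 r) x))"
    and "norm (F (closest_point (cball x0 r) x)) \<le> norm (F x0) + L * r"
proof -
  have ball: "convex (cball x0 r)" "closed (cball x0 r)" "cball x0 r \<noteq> {}" using r by auto
  then have cp: "closest_point (cball x0 r) x \<in> cball x0 r" for x by (intro closest_point_in_set)
  have "1-lipschitz_on UNIV (closest_point (cball x0 r))"
    using closest_point_lipschitz[OF ball(1,2)] r by (intro lipschitz_onI) auto
  then have "(L * 1)-lipschitz_on UNIV (\<lambda>x. F (closest_point (cball x0 r) x))"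
    using cp by (intro lipschitz_on_compose2 lipschitz_on_subset[OF lip]) auto
  then show "L-lipschitz_on UNIV (\<lambda>x. F (closest_point (cball x0 r) x))" by simp
  have "dist (F (closest_point (cball x0 r) x)) (F x0) \<le> L * dist (closest_point (cball x0 r) x) x0"
    using r cp by (intro lipschitz_onD[OF lip]) auto
  also have "\<dots> \<le> L * r"
    using cp lipschitz_on_nonneg[OF lip] by (intro mult_left_mono) (auto simp: dist_commute)
  finally show "norm (F (closest_point (cball x0 r) x)) \<le> norm (F x0) + L * r"
    by (metis add.commute dist_norm norm_triangle_sub order_trans add_left_mono)
qed

lemma lipschitz_ode_local_solution:
  fixes F :: "'a::euclidean_space \<Rightarrow> 'a"
  assumes r: "0 < r" and lip: "L-lipschitz_on (cball x0 r) F"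
  obtains d X where "0 < d" "X 0 = x0"
    "\<And>t. t \<in> {0..d} \<Longrightarrow> (X has_vector_derivative F (X t)) (at t within {0..d})"
proof -
  define K where "K = norm (F x0) + L * r"
  have L0: "0 \<le> L" using lip lipschitz_on_nonneg by blast
  then have K0: "0 \<le> K" using r by (simp add: K_def)
  define d where "d = min (r / (K + 1)) (1 / (2 * (L + 1)))"
  have d: "0 < d" "d * L < 1" "K * d \<le> r"
  proof -
    show "0 < d" using r K0 L0 by (simp add: d_def)
    have "d * L \<le> 1 / (2 * (L + 1)) * L" using L0 by (intro mult_right_mono) (auto simp: d_def)
    also have "\<dots> < 1" using L0 by (simp add: field_simps)
    finally show "d * L < 1" .
    have "K * d \<le> K * (r / (K + 1))" using K0 by (intro mult_left_mono) (auto simp: d_def)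
    also have "\<dots> \<le> r" using K0 r by (simp add: field_simps)
    finally show "K * d \<le> r" .
  qed
  text \<open>Solve the globally Lipschitz extension of \<open>F\<close>; the solution stays in the ball, where both agree.\<close>
  obtain X where X0: "X 0 = x0"
    and X': "\<And>t. t \<in> {0..d} \<Longrightarrow>
        (X has_vector_derivative F (closest_point (cball x0 r) (X t))) (at t within {0..d})"
    and X_near: "\<And>t. t \<in> {0..d} \<Longrightarrow> norm (X t - x0) \<le> K * d"
    using lipschitz_ode_local_existence[OF closest_point_cball_extension[OF r lip] d(1,2)]
    unfolding K_def by metis
  have "X t \<in> cball x0 r" if "t \<in> {0..d}" for t
    using X_near[OF that] d(3) by (simp add: dist_norm norm_minus_commute)
  then show ?thesis
    using that[of d X] d(1) X0 X' by (simp add: closest_point_self)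
qed

lemma has_vector_derivative_fst:
  "(f has_vector_derivative f') F \<Longrightarrow> ((\<lambda>t. fst (f t)) has_vector_derivative fst f') F"
  unfolding has_vector_derivative_def by (drule has_derivative_fst) simp

lemma has_vector_derivative_snd:
  "(f has_vector_derivative f') F \<Longrightarrow> ((\<lambda>t. snd (f t)) has_vector_derivative snd f') F"
  unfolding has_vector_derivative_def by (drule has_derivative_snd) simp

lemma has_vector_derivative_blinfun_compose:
  assumes "(f has_vector_derivative f') (at t within S)" and "(g has_derivative blinfun_apply Dg) (at (f t))"
  shows "((\<lambda>t. g (f t)) has_vector_derivative Dg f') (at t within S)"
proof -
  have "((\<lambda>t. g (f t)) has_derivative (\<lambda>s. Dg (s *\<^sub>R f'))) (at t within S)"
    using assms unfolding has_vector_derivative_def by (rule has_derivative_compose)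
  then show ?thesis
    unfolding has_vector_derivative_def by (simp only: blinfun.scaleR_right)
qed

lemma invariant_graph_tangent:
  assumes inv: "invariant_graph eps A M B G h"
    and h': "(h has_derivative blinfun_apply Dh) (at (r0, u0))"
    and d: "0 < d" and X0: "X 0 = (r0, u0, h (r0, u0))"
    and X': "\<And>t. t \<in> {0..d} \<Longrightarrow> (X has_vector_derivative first_order_field eps A M B G (X t)) (at t within {0..d})"
  shows "Dh (u0, h (r0, u0)) = jerk eps A M B G r0 u0 (h (r0, u0))"
proof -
  define R where "R t = fst (X t)" for t
  define U where "U t = fst (snd (X t))" for t
  define Y where "Y t = snd (snd (X t))" for t
  have X_eq: "X t = (R t, U t, Y t)" for t by (simp add: R_def U_def Y_def)
  have RUY0: "R 0 = r0" "U 0 = u0" "Y 0 = h (r0, u0)" using X0 by (simp_all add: X_eq)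
  have R': "(R has_vector_derivative U t) (at t within {0..d})"
    and U': "(U has_vector_derivative Y t) (at t within {0..d})"
    and Y': "(Y has_vector_derivative jerk eps A M B G (R t) (U t) (Y t)) (at t within {0..d})"
    if "t \<in> {0..d}" for t
    using has_vector_derivative_fst[OF X'[OF that]] has_vector_derivative_snd[OF X'[OF that]]
      has_vector_derivative_fst[OF has_vector_derivative_snd[OF X'[OF that]]]
      has_vector_derivative_snd[OF has_vector_derivative_snd[OF X'[OF that]]]
    unfolding R_def[abs_def] U_def[abs_def] Y_def[abs_def]
    by (simp_all add: first_order_field_def split_beta)
  have on_graph: "Y t = h (R t, U t)" if "t \<in> {0..d}" for t
  proof (rule inv[unfolded invariant_graph_def, rule_format, OF _ that], intro conjI ballI)
    show "is_interval {0..d}" "0 \<in> {0..d}" "Y 0 = h (R 0, U 0)"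
      using d RUY0 by (simp_all add: is_interval_cc)
  qed (use R' U' Y' in \<open>simp_all add: jerk_def\<close>)
  have "(R has_vector_derivative u0) (at 0 within {0..d})"
    "(U has_vector_derivative h (r0, u0)) (at 0 within {0..d})"
    using R'[of 0] U'[of 0] d RUY0 by simp_all
  then have "((\<lambda>t. (R t, U t)) has_vector_derivative (u0, h (r0, u0))) (at 0 within {0..d})"
    by (rule has_vector_derivative_Pair)
  then have "((\<lambda>t. h (R t, U t)) has_vector_derivative Dh (u0, h (r0, u0))) (at 0 within {0..d})"
    using h' RUY0 by (intro has_vector_derivative_blinfun_compose) simp_all
  then have "(Y has_vector_derivative Dh (u0, h (r0, u0))) (at 0 within {0..d})"
    by (rule has_vector_derivative_transform_within[where d=1]) (use d on_graph in auto)
  then show ?thesis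
    using Y'[of 0] d vector_derivative_unique_within_closed_interval[of 0 d 0 Y] RUY0
    by (simp add: cbox_interval)
qed

lemma center_manifold_tangent:
  assumes G: "bounded_lipschitz_on UNIV G" and charge: "charge rho \<noteq> 0" and u1: "u1 < 1"
    and agree: "\<forall>v. norm v \<le> u1 \<longrightarrow> amod v = amat rho v \<and> mmod v = mmat rho v \<and> (\<forall>w. bmod v w = bvec rho v w)"
    and inv: "invariant_graph eps amod mmod bmod G h"
    and h': "(h has_derivative blinfun_apply Dh) (at (r0, u0))"
    and u0: "norm u0 < u1"
  shows "Dh (u0, h (r0, u0)) = jerk eps (amat rho) (mmat rho) (bvec rho) G r0 u0 (h (r0, u0))"
proof -
  define x0 where "x0 = (r0, u0, h (r0, u0))"
  define S where "S = cball x0 (u1 - norm u0)"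
  have u_S: "norm (fst (snd x)) \<le> u1" if "x \<in> S" for x
  proof -
    have "norm (fst (snd x) - u0) \<le> norm (snd (x - x0))"
      using norm_fst_le[of "fst (snd (x - x0))" "snd (snd (x - x0))"] by (cases x) (simp add: x0_def)
    also have "\<dots> \<le> norm (x - x0)"
      using norm_snd_le[of "snd (x - x0)" "fst (x - x0)"] by (cases x) (simp add: x0_def)
    also have "\<dots> \<le> u1 - norm u0"
      using that by (simp add: S_def dist_norm norm_minus_commute)
    finally show ?thesis
      using norm_triangle_sub[of "fst (snd x)" u0] by linarith
  qed
  have field_eq: "first_order_field eps amod mmod bmod G x = first_order_field eps (amat rho) (mmat rho) (bvec rho) G x"
    if "x \<in> S" for x
    using agree u_S[OF that] by (auto simp: first_order_field_def jerk_def split: prod.splits)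
  have "0 \<le> u1" using u0 norm_ge_zero[of u0] by linarith
  then have "bounded_lipschitz_on S (first_order_field eps (amat rho) (mmat rho) (bvec rho) G)"
    using u1 u_S by (intro bounded_lipschitz_on_first_order_field[OF G charge]) (auto simp: S_def)
  then obtain L where L: "L-lipschitz_on S (first_order_field eps amod mmod bmod G)"
    using field_eq lipschitz_on_transform by (metis bounded_lipschitz_on_def)
  obtain d X where d: "0 < d" and X0: "X 0 = x0"
    and X': "\<And>t. t \<in> {0..d} \<Longrightarrow> (X has_vector_derivative first_order_field eps amod mmod bmod G (X t)) (at t within {0..d})"
    by (rule lipschitz_ode_local_solution[OF _ L[unfolded S_def]]) (use u0 in auto)
  have "Dh (u0, h (r0, u0)) = jerk eps amod mmod bmod G r0 u0 (h (r0, u0))"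
    by (rule invariant_graph_tangent[OF inv h' d X0[unfolded x0_def] X'])
  then show ?thesis
    using agree u0 by (simp add: jerk_def)
qed

section \<open>Repulsion from the center manifold\<close>

lemma nonpos_if_exponential_growth_bounded:
  fixes q q' :: "real \<Rightarrow> real"
  assumes q': "\<And>t. (q has_real_derivative q' t) (at t)"
    and growth: "\<And>t. lam * q t \<le> q' t" and lam: "0 < lam" and bounded: "\<And>t. q t \<le> B"
  shows "q t0 \<le> 0"
proof (rule ccontr)
  assume "\<not> q t0 \<le> 0"
  then have q0: "0 < q t0" by simp
  define t1 where "t1 = t0 + (\<bar>B\<bar> + 1) / (lam * q t0)"
  have t1: "t0 \<le> t1" using lam q0 by (simp add: t1_def)
  have "q t0 * exp (- lam * t0) \<le> q t1 * exp (- lam * t1)"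
  proof (rule DERIV_nonneg_imp_nondecreasing[OF t1])
    fix t
    have "((\<lambda>t. q t * exp (- lam * t)) has_real_derivative (q' t - lam * q t) * exp (- lam * t)) (at t)"
      by (auto intro!: derivative_eq_intros q' simp: algebra_simps)
    then show "\<exists>y. ((\<lambda>t. q t * exp (- lam * t)) has_real_derivative y) (at t) \<and> 0 \<le> y"
      using growth[of t] by (intro exI conjI) auto
  qed
  then have "q t0 * exp (lam * (t1 - t0)) \<le> q t1"
    by (simp add: exp_diff field_simps exp_minus)
  moreover have "q t0 * (1 + lam * (t1 - t0)) \<le> q t0 * exp (lam * (t1 - t0))"
    using q0 by (intro mult_left_mono) (auto simp: exp_ge_add_one_self add.commute)
  moreover have "q t0 * (1 + lam * (t1 - t0)) = q t0 + \<bar>B\<bar> + 1"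
    using lam q0 by (simp add: t1_def field_simps)
  ultimately show False
    using bounded[of t1] q0 by linarith
qed

lemma zero_if_repelled_and_bounded:
  fixes z z' :: "real \<Rightarrow> 'a::real_inner"
  assumes z': "\<And>t. (z has_vector_derivative z' t) (at t)"
    and repelled: "\<And>t. lam * (z t \<bullet> z t) \<le> z t \<bullet> z' t" and lam: "0 < lam"
    and bounded: "\<And>t. norm (z t) \<le> B"
  shows "z t = 0"
proof -
  have "((\<lambda>t. z t \<bullet> z t) has_real_derivative 2 * (z t \<bullet> z' t)) (at t)" for t
    using has_derivative_inner[OF z'[unfolded has_vector_derivative_def] z'[unfolded has_vector_derivative_def]]
    by (rule has_derivative_imp_has_field_derivative) (simp add: inner_commute algebra_simps)
  moreover have "2 * lam * (z t \<bullet> z t) \<le> 2 * (z t \<bullet> z' t)" for t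
    using repelled[of t] by simp
  moreover have "z t \<bullet> z t \<le> B\<^sup>2" for t
    using bounded[of t] norm_ge_zero[of "z t"] by (simp add: dot_square_norm power_mono)
  ultimately have "z t \<bullet> z t \<le> 0"
    using lam by (intro nonpos_if_exponential_growth_bounded[where lam = "2 * lam"]) auto
  then have "z t \<bullet> z t = 0" using inner_ge_zero[of "z t"] by linarith
  then show ?thesis by simp
qed

lemma inner_graph_deviation_derivative_ge:
  fixes D :: "((real^3) \<times> (real^3)) \<Rightarrow>\<^sub>L (real^3)"
  assumes eps: "0 < eps" and charge: "charge rho \<noteq> 0" and u: "norm u \<le> ub" and ub: "ub < 1"
    and eq: "mmat rho u *v y = - G r + eps *\<^sub>R (amat rho u *v y') + eps *\<^sub>R bvec rho u y"
    and tangent: "D (u, w) = jerk eps (amat rho) (mmat rho) (bvec rho) G r u w"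
    and D_bound: "norm D \<le> H"
    and B: "norm (bvec rho u y - bvec rho u w) \<le> K * norm (y - w)"
  shows "((1 - ub\<^sup>2) ^ 3 / (4 * amat_prefactor rho * eps) - 2 * K / amat_prefactor rho - H) * ((y - w) \<bullet> (y - w))
           \<le> (y - w) \<bullet> (y' - D (u, y))"
proof -
  define J where "J = jerk eps (amat rho) (mmat rho) (bvec rho) G r u"
  have "y' = J y"
    unfolding J_def using eps u ub eq by (intro jerk_of_effective_equation[symmetric] charge) auto
  moreover have "D (u, y) = J w + D (0, y - w)"
    using tangent blinfun.add_right[of D "(u, w)" "(0, y - w)"] by (simp add: J_def)
  moreover have "((1 - ub\<^sup>2) ^ 3 / (4 * amat_prefactor rho * eps) - 2 * K / amat_prefactor rho) * ((y - w) \<bullet> (y - w))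
      \<le> (y - w) \<bullet> (J y - J w)"
    unfolding J_def by (rule inner_jerk_diff_ge[OF eps u ub charge B])
  moreover have "(y - w) \<bullet> D (0, y - w) \<le> H * ((y - w) \<bullet> (y - w))"
  proof -
    have "(y - w) \<bullet> D (0, y - w) \<le> norm (y - w) * (norm D * norm (0::real^3, y - w))"
      by (intro order_trans[OF norm_cauchy_schwarz] mult_left_mono norm_blinfun) auto
    also have "\<dots> \<le> norm (y - w) * (H * norm (y - w))"
      using D_bound by (intro mult_left_mono) (simp_all add: norm_Pair mult_right_mono)
    finally show ?thesis by (simp add: dot_square_norm power2_eq_square mult_ac)
  qed
  ultimately show ?thesis
    by (simp add: inner_diff_right inner_add_right left_diff_distrib)
qed

lemma effective_solution_on_center_manifold:
  fixes r u du ddu :: "real \<Rightarrow> real^3" and h :: "(real^3) \<times> (real^3) \<Rightarrow> real^3"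
    and Dh :: "(real^3) \<times> (real^3) \<Rightarrow> ((real^3) \<times> (real^3)) \<Rightarrow>\<^sub>L (real^3)"
  assumes eps: "0 < eps" and charge: "charge rho \<noteq> 0" and G: "bounded_lipschitz_on UNIV G"
    and sol: "\<And>t. (r has_vector_derivative u t) (at t) \<and> (u has_vector_derivative du t) (at t) \<and>
        (du has_vector_derivative ddu t) (at t) \<and>
        mmat rho (u t) *v du t = - G (r t) + eps *\<^sub>R (amat rho (u t) *v ddu t) + eps *\<^sub>R bvec rho (u t) (du t)"
    and u_bound: "\<And>t. norm (u t) \<le> ub" and du_bound: "\<And>t. norm (du t) \<le> D"
    and u1: "ub < u1" "u1 < 1"
    and agree: "\<forall>v. norm v \<le> u1 \<longrightarrow> amod v = amat rho v \<and> mmod v = mmat rho v \<and> (\<forall>w. bmod v w = bvec rho v w)"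
    and inv: "invariant_graph eps amod mmod bmod G h"
    and h': "\<And>x. (h has_derivative blinfun_apply (Dh x)) (at x)"
    and h_bound: "\<And>x. norm (h x) \<le> H" and Dh_bound: "\<And>x. norm (Dh x) \<le> H"
    and K: "0 \<le> K" and bvec_lip: "\<And>v a b. norm v \<le> ub \<Longrightarrow> norm a \<le> D + H \<Longrightarrow> norm b \<le> D + H \<Longrightarrow>
        norm (bvec rho v a - bvec rho v b) \<le> K * norm (a - b)"
    and small: "eps \<le> (1 - ub\<^sup>2) ^ 3 / (4 * (2 * K + (H + 1) * amat_prefactor rho))"
  shows "du t = h (r t, u t)"
proof -
  define z where "z t = du t - h (r t, u t)" for t
  define lam where "lam = (1 - ub\<^sup>2) ^ 3 / (4 * amat_prefactor rho * eps) - 2 * K / amat_prefactor rho - H"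
  have "0 \<le> H" using h_bound[of undefined] norm_ge_zero order_trans by blast
  have "0 \<le> D" using du_bound[of undefined] norm_ge_zero order_trans by blast
  have k: "0 < amat_prefactor rho" by (rule amat_prefactor_pos[OF charge])
  then have "0 < 2 * K + (H + 1) * amat_prefactor rho"
    using K \<open>0 \<le> H\<close> by (simp add: add_nonneg_pos)
  then have "eps * (4 * (2 * K + (H + 1) * amat_prefactor rho)) \<le> (1 - ub\<^sup>2) ^ 3"
    using small by (simp add: pos_le_divide_eq)
  moreover have "(2 * K / amat_prefactor rho + H + 1) * (4 * amat_prefactor rho * eps) = eps * (4 * (2 * K + (H + 1) * amat_prefactor rho))"
    using k by (simp add: field_simps)
  moreover have "0 < 4 * amat_prefactor rho * eps" using k eps by simp
  ultimately have "2 * K / amat_prefactor rho + H + 1 \<le> (1 - ub\<^sup>2) ^ 3 / (4 * amat_prefactor rho * eps)"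
    by (metis pos_le_divide_eq)
  then have lam: "0 < lam"
    by (simp add: lam_def)
  have z': "(z has_vector_derivative ddu t - Dh (r t, u t) (u t, du t)) (at t)" for t
    using sol[of t] h'[of "(r t, u t)"] unfolding z_def[abs_def]
    by (intro has_vector_derivative_diff has_vector_derivative_blinfun_compose has_vector_derivative_Pair) auto
  have tangent: "Dh (r0, u0) (u0, h (r0, u0)) = jerk eps (amat rho) (mmat rho) (bvec rho) G r0 u0 (h (r0, u0))"
    if "norm u0 \<le> ub" for r0 u0
    using center_manifold_tangent[OF G charge u1(2) agree inv h'] that u1 by simp
  have "lam * (z t \<bullet> z t) \<le> z t \<bullet> (ddu t - Dh (r t, u t) (u t, du t))" for t
    unfolding lam_def z_def
    using sol[of t] tangent[OF u_bound[of t], of "r t"] Dh_bound[of "(r t, u t)"]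
      du_bound[of t] h_bound[of "(r t, u t)"] \<open>0 \<le> H\<close> \<open>0 \<le> D\<close> u1
    by (intro inner_graph_deviation_derivative_ge eps charge u_bound bvec_lip) auto
  moreover have "norm (z t) \<le> D + H" for t
    unfolding z_def using du_bound[of t] h_bound[of "(r t, u t)"] norm_triangle_ineq4 order_trans add_mono
    by metis
  ultimately have "z t = 0"
    by (intro zero_if_repelled_and_bounded[OF z' _ lam])
  then show ?thesis by (simp add: z_def)
qed

theorem proposition4p6:
  fixes V :: "real^3 \<Rightarrow> real" and gradV :: "real^3 \<Rightarrow> real^3"
    and hessV :: "real^3 \<Rightarrow> real^3^3" and D3V :: "real^3 \<Rightarrow> real^3^3^3"
    and rho :: "real^3 \<Rightarrow> real"
    and ubar c2 eps2 :: real
    and r u du ddu :: "real \<Rightarrow> real \<Rightarrow> real^3"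
    and amod mmod :: "real^3 \<Rightarrow> real^3^3" and bmod :: "real^3 \<Rightarrow> real^3 \<Rightarrow> real^3"
    and eps1 c :: real
    and h :: "real \<Rightarrow> ((real^3) \<times> (real^3)) \<Rightarrow> real^3"
    and Dh :: "real \<Rightarrow> ((real^3) \<times> (real^3)) \<Rightarrow> ((real^3) \<times> (real^3)) \<Rightarrow>\<^sub>L (real^3)"
  assumes \<comment> \<open>(U): V in C^3 with bounded V and derivatives up to order 3\<close>
    V_deriv: "\<And>x. (V has_derivative (\<lambda>k. gradV x \<bullet> k)) (at x)"
    and gradV_deriv: "\<And>x. (gradV has_derivative (\<lambda>k. hessV x *v k)) (at x)"
    and hessV_deriv: "\<And>x. (hessV has_derivative
           (\<lambda>k. \<chi> i j. \<Sum>l\<in>UNIV. D3V x $ i $ j $ l * k $ l)) (at x)"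
    and D3V_cont: "continuous_on UNIV D3V"
    and V_inf: "bdd_below (range V)"
    and V_bdd: "\<exists>B. \<forall>x. \<bar>V x\<bar> + norm (gradV x) + norm (hessV x) + norm (D3V x) \<le> B"
    \<comment> \<open>the charge distribution rho\<close>
    and rho_smooth: "smooth_fun rho" and rho_supp: "compact_support rho"
    and rho_radial: "radial rho" and charge_nz: "charge rho \<noteq> 0"
    \<comment> \<open>the family of solutions\<close>
    and ubar: "ubar < 1" and c2: "c2 > 0" and eps2: "eps2 > 0"
    and sol: "\<And>eps t. 0 < eps \<Longrightarrow> eps \<le> eps2 \<Longrightarrow>
        (r eps has_vector_derivative u eps t) (at t) \<and>
        (u eps has_vector_derivative du eps t) (at t) \<and>
        (du eps has_vector_derivative ddu eps t) (at t) \<and>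
        mmat rho (u eps t) *v du eps t =
          - gradV (r eps t) + eps *\<^sub>R (amat rho (u eps t) *v ddu eps t)
          + eps *\<^sub>R bvec rho (u eps t) (du eps t)"
    and sol_bounds: "\<And>eps t. 0 < eps \<Longrightarrow> eps \<le> eps2 \<Longrightarrow>
        norm (u eps t) \<le> ubar \<and> norm (du eps t) + norm (ddu eps t) \<le> c2"
    \<comment> \<open>modified coefficients: unchanged near the ball of radius ubar,
        constant outside the ball of radius (1+ubar)/2\<close>
    and modif_agree: "\<exists>u1. ubar < u1 \<and> u1 \<le> (1 + ubar) / 2 \<and>
        (\<forall>v. norm v \<le> u1 \<longrightarrow> amod v = amat rho v \<and> mmod v = mmat rho v \<and>
                              (\<forall>w. bmod v w = bvec rho v w))"
    and modif_const: "\<And>v v'. norm v > (1 + ubar) / 2 \<Longrightarrow> norm v' > (1 + ubar) / 2 \<Longrightarrow>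
        amod v = amod v' \<and> mmod v = mmod v' \<and> bmod v = bmod v'"
    \<comment> \<open>the center manifolds I_eps = graph of h eps, for 0 < eps <= eps1\<close>
    and eps1: "eps1 > 0" and c: "c > 0"
    and h_C1: "\<And>eps x. 0 < eps \<Longrightarrow> eps \<le> eps1 \<Longrightarrow>
        (h eps has_derivative blinfun_apply (Dh eps x)) (at x)"
    and Dh_cont: "\<And>eps. 0 < eps \<Longrightarrow> eps \<le> eps1 \<Longrightarrow> continuous_on UNIV (Dh eps)"
    and h_bdd: "\<exists>B. \<forall>eps x. 0 < eps \<longrightarrow> eps \<le> eps1 \<longrightarrow>
        norm (h eps x) \<le> B \<and> norm (Dh eps x) \<le> B"
    and h_approx: "\<And>eps r0 u0. 0 < eps \<Longrightarrow> eps \<le> eps1 \<Longrightarrow>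
        norm (h eps (r0, u0) + matrix_inv (mmod u0) *v gradV r0) \<le> c * eps"
    and h_inv: "\<And>eps. 0 < eps \<Longrightarrow> eps \<le> eps1 \<Longrightarrow> invariant_graph eps amod mmod bmod gradV (h eps)"
  shows "\<exists>eps0>0. \<forall>eps. 0 < eps \<and> eps \<le> eps0 \<and> eps \<le> eps2 \<and> eps \<le> eps1 \<longrightarrow>
           (\<forall>t. du eps t = h eps (r eps t, u eps t))"
proof -
  obtain u1 where u1: "ubar < u1" "u1 \<le> (1 + ubar) / 2"
    and agree: "\<forall>v. norm v \<le> u1 \<longrightarrow> amod v = amat rho v \<and> mmod v = mmat rho v \<and> (\<forall>w. bmod v w = bvec rho v w)"
    using modif_agree by blast
  have ubar0: "0 \<le> ubar"
    using sol_bounds[OF eps2 order_refl, of 0] norm_ge_zero order_trans by blast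
  obtain BV where BV: "\<And>x. \<bar>V x\<bar> + norm (gradV x) + norm (hessV x) + norm (D3V x) \<le> BV"
    using V_bdd by blast
  have "norm (gradV x) \<le> BV" "norm (hessV x) \<le> BV" for x
    using BV[of x] abs_ge_zero[of "V x"] norm_ge_zero[of "gradV x"] norm_ge_zero[of "hessV x"]
      norm_ge_zero[of "D3V x"] by linarith+
  then have G: "bounded_lipschitz_on UNIV gradV"
    by (rule bounded_lipschitz_on_UNIV_of_bounded_derivative[OF gradV_deriv])
  obtain H where H: "\<And>eps x. 0 < eps \<Longrightarrow> eps \<le> eps1 \<Longrightarrow> norm (h eps x) \<le> H \<and> norm (Dh eps x) \<le> H"
    using h_bdd by blast
  obtain K where K: "0 \<le> K" and bvec_lip: "\<And>v a b. norm v \<le> ubar \<Longrightarrow> norm a \<le> c2 + H \<Longrightarrow> norm b \<le> c2 + H \<Longrightarrow>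
      norm (bvec rho v a - bvec rho v b) \<le> K * norm (a - b)"
    using bvec_lipschitz_in_second_argument[OF ubar0 ubar] by metis
  have "0 \<le> H" using H[OF eps1 order_refl, of undefined] norm_ge_zero order_trans by blast
  define eps0 where "eps0 = (1 - ubar\<^sup>2) ^ 3 / (4 * (2 * K + (H + 1) * amat_prefactor rho))"
  have "0 < eps0"
    using ubar0 ubar K \<open>0 \<le> H\<close> amat_prefactor_pos[OF charge_nz]
    by (auto simp: eps0_def power_less_one_iff intro!: divide_pos_pos add_nonneg_pos)
  moreover have "du eps t = h eps (r eps t, u eps t)"
    if eps: "0 < eps" "eps \<le> eps0" "eps \<le> eps2" "eps \<le> eps1" for eps t
  proof (rule effective_solution_on_center_manifold[OF eps(1) charge_nz G sol[OF eps(1,3)] _ _ _ _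
        agree h_inv[OF eps(1,4)] h_C1[OF eps(1,4)] _ _ K bvec_lip])
    show "norm (u eps s) \<le> ubar" "norm (du eps s) \<le> c2" for s
      using sol_bounds[OF eps(1,3), of s] norm_ge_zero[of "ddu eps s"] by linarith+
  qed (use u1 ubar H[OF eps(1,4)] eps(2) in \<open>auto simp: eps0_def\<close>)
  ultimately show ?thesis by blast
qed

end
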